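(* Let $\bar x=1/x$ and let $Y=Y(t;x)$ be the unique formal power series in $t$ (with coefficients in $\mathbb{Q}[x,\bar x]$) satisfying $$Y=t(1+\bar x)(1+Y)(x+Y).$$ Let $$R(x,Y)=Y(x+1-\bar x^{5}-\bar x^{6})+Y^2(\bar x^{5}-\bar x)+Y^3(\bar x^{3}+\bar x^{6}-\bar x-\bar x^{4})+Y^4(\bar x^{3}-\bar x^{5}).$$ Then the series $E(u,v)$ defined below satisfies $$E(1+x,1+x)=\mathop{\mathrm{PT}}_{x}R(x,Y),$$ where $\mathop{\mathrm{PT}}_x$ extracts the non-negative powers of $x$ in a series of $\mathbb{Q}[x,\bar x][[t]]$.
   Context: $\mathbf{I}_n(\geq,\geq,-)$ is the set of inversion sequences $e=(e_1,\ldots,e_n)$ ($0\leq e_i<i$) with no $i<j<k$ such that $e_i\geq e_j\geq e_k$. An entry $e_i$ is a left-to-right maximum if $e_i>e_j$ for all $j<i$. Let $\alpha(e)=\max_i e_i$ and $\beta(e)$ the largest element of $\{e_i: e_i\text{ not a left-to-right maximum}\}\cup\{-1\}$; the parameters of $e$ are $(p,q)=(\alpha(e)-\beta(e),\,n-\alpha(e))$. Define $E(u,v)=\sum_{n\geq1}\sum_{e\in\mathbf{I}_n(\geq,\geq,-)}u^{p(e)}v^{q(e)}t^n$, where $(p(e),q(e))$ are the parameters of $e$; it is the series solution of $\bigl(1+\frac{tv}{1-u}+\frac{tv}{1-v/u}\bigr)E(u,v)=tuv+\frac{tv}{1-u}E(1,v)+\frac{tv}{1-v/u}E(u,u)$.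 *)

theory Defs
  imports "HOL-Computational_Algebra.Formal_Laurent_Series"
begin

text \<open>An inversion sequence e = (e_1,...,e_n) with 0 <= e_i < i is represented by a
  list of length n, 0-indexed: e ! i stands for e_(i+1), so the condition is e ! i <= i.\<close>

definition inv_seq :: "nat \<Rightarrow> nat list set" where
  "inv_seq n = {e. length e = n \<and> (\<forall>i<n. e ! i \<le> i)}"

definition avoids_ge_ge :: "nat list \<Rightarrow> bool" where
  "avoids_ge_ge e \<longleftrightarrow>
     \<not> (\<exists>i j k. i < j \<and> j < k \<and> k < length e \<and> e ! i \<ge> e ! j \<and> e ! j \<ge> e ! k)"

definition I_gge :: "nat \<Rightarrow> nat list set" where
  "I_gge n = {e \<in> inv_seq n. avoids_ge_ge e}"

definition ltr_max :: "nat list \<Rightarrow> nat \<Rightarrow> bool" where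
  "ltr_max e i \<longleftrightarrow> (\<forall>j<i. e ! j < e ! i)"

definition alpha :: "nat list \<Rightarrow> int" where
  "alpha e = int (Max (set e))"

definition beta :: "nat list \<Rightarrow> int" where
  "beta e = Max ({int (e ! i) | i. i < length e \<and> \<not> ltr_max e i} \<union> {-1})"

definition par_p :: "nat list \<Rightarrow> int" where
  "par_p e = alpha e - beta e"

definition par_q :: "nat list \<Rightarrow> int" where
  "par_q e = int (length e) - alpha e"

text \<open>The parameters p, q are non-negative, so nat does not truncate.\<close>
definition E_gf :: "'a::comm_ring_1 \<Rightarrow> 'a \<Rightarrow> 'a fps" where
  "E_gf u v = Abs_fps (\<lambda>n. if n = 0 then 0 else
      (\<Sum>e\<in>I_gge n. u ^ nat (par_p e) * v ^ nat (par_q e)))"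

text \<open>Power series in t whose coefficients are Laurent series in x
  (these contain Q[x, 1/x]). x is fls_X and xbar = 1/x is fls_X_inv.\<close>

type_synonym ser = "rat fls fps"

abbreviation xx :: "rat fls" where "xx \<equiv> fls_X"
abbreviation xb :: "rat fls" where "xb \<equiv> fls_X_inv"

definition Yser :: ser where
  "Yser = (THE Y. Y = fps_X * fps_const (1 + xb) * (1 + Y) * (fps_const xx + Y))"

definition Rser :: "ser \<Rightarrow> ser" where
  "Rser Y = Y * fps_const (xx + 1 - xb ^ 5 - xb ^ 6)
          + Y ^ 2 * fps_const (xb ^ 5 - xb)
          + Y ^ 3 * fps_const (xb ^ 3 + xb ^ 6 - xb - xb ^ 4)
          + Y ^ 4 * fps_const (xb ^ 3 - xb ^ 5)"

definition PT_x :: "ser \<Rightarrow> rat fps fps" where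
  "PT_x F = Abs_fps (\<lambda>n. fls_regpart (F $ n))"

end

theory Submission
  imports Defs
begin

text \<open>Appending a last entry \<open>c\<close> to \<open>e \<in> I\<^sub>n(\<ge>,\<ge>,-)\<close> is allowed exactly when
  \<open>\<beta>(e) < c \<le> n\<close>, and the new parameters depend only on \<open>(p, q)\<close> and \<open>c\<close>; summing
  the two geometric series this produces gives the functional equation for \<open>E(u, v)\<close>, whose
  kernel vanishes at \<open>u = 1 + a\<close>, \<open>v = (1 + a)(1 + b)\<close> precisely when
  \<open>ab = t(1 + a)(1 + b)(a + b)\<close>. For such a pair the two resulting equations eliminate the
  unknown \<open>E(1, v)\<close> and give
  \<open>a\<^sup>2 E(1 + a, 1 + a) - b\<^sup>2 E(1 + b, 1 + b) = ab(a - b)(1 + a + b)\<close>.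
  The pairs \<open>(x, Y)\<close>, \<open>(Y, Y/x)\<close>, \<open>(Y/x, 1/x)\<close> are such roots, so telescoping yields
  \<open>R(x, Y) = E(1 + x, 1 + x) - E(1 + 1/x, 1 + 1/x) / x\<^sup>4\<close>. The second term contains
  only negative powers of \<open>x\<close>, so the non-negative part of \<open>R(x, Y)\<close> is \<open>E(1 + x, 1 + x)\<close>.\<close>

section \<open>Appending a last entry\<close>

lemma ltr_max_snoc: "i < length e \<Longrightarrow> ltr_max (e @ [c]) i \<longleftrightarrow> ltr_max e i"
  unfolding ltr_max_def by (auto simp: nth_append)

lemma ltr_max_snoc_last: "e \<noteq> [] \<Longrightarrow> ltr_max (e @ [c]) (length e) \<longleftrightarrow> alpha e < int c"
  unfolding ltr_max_def alpha_def by (auto simp: nth_append all_set_conv_all_nth)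

lemma alpha_snoc: "e \<noteq> [] \<Longrightarrow> alpha (e @ [c]) = max (alpha e) (int c)"
  unfolding alpha_def by (simp add: max.commute)

lemma alpha_less_length: "e \<in> inv_seq n \<Longrightarrow> e \<noteq> [] \<Longrightarrow> alpha e < int n"
  unfolding inv_seq_def alpha_def by (auto simp: in_set_conv_nth intro: le_less_trans) (meson le_less_trans)

lemma beta_ge: "-1 \<le> beta e"
  unfolding beta_def by simp

lemma beta_le_alpha: "e \<noteq> [] \<Longrightarrow> beta e \<le> alpha e"
  unfolding beta_def alpha_def by auto

lemma beta_less_iff: "beta e < int c \<longleftrightarrow> (\<forall>j<length e. \<not> ltr_max e j \<longrightarrow> e ! j < c)"
  unfolding beta_def by auto

lemma beta_snoc:
  "beta (e @ [c]) = (if ltr_max (e @ [c]) (length e) then beta e else max (beta e) (int c))"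
proof -
  define S where "S e = {int (e ! i) | i. i < length e \<and> \<not> ltr_max e i}" for e
  have "{int ((e @ [c]) ! i) | i. i < length e \<and> \<not> ltr_max (e @ [c]) i} = S e"
    unfolding S_def by (metis (lifting) ltr_max_snoc nth_append_left)
  moreover have "S (e @ [c]) = {int ((e @ [c]) ! i) | i. i < length e \<and> \<not> ltr_max (e @ [c]) i}
      \<union> (if ltr_max (e @ [c]) (length e) then {} else {int c})"
    unfolding S_def by (auto simp: less_Suc_eq) (metis nth_append_length)
  moreover have "finite (S e)"
    unfolding S_def by simp
  then have "Max ((S e \<union> {-1}) \<union> {int c}) = max (Max (S e \<union> {-1})) (int c)"
    by (subst Max.union) auto
  ultimately show ?thesis
    unfolding beta_def S_def[symmetric] by (simp add: Un_ac)
qed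

lemma avoids_ge_ge_snoc_prefix: "avoids_ge_ge (e @ [c]) \<Longrightarrow> avoids_ge_ge e"
  unfolding avoids_ge_ge_def
proof (elim contrapos_nn exE conjE)
  fix i j k
  assume "i < j" "j < k" "k < length e" "e ! i \<ge> e ! j" "e ! j \<ge> e ! k"
  then show "\<exists>i j k. i < j \<and> j < k \<and> k < length (e @ [c]) \<and>
      (e @ [c]) ! i \<ge> (e @ [c]) ! j \<and> (e @ [c]) ! j \<ge> (e @ [c]) ! k"
    by (intro exI[of _ i] exI[of _ j] exI[of _ k]) (simp add: nth_append)
qed

lemma avoids_ge_ge_snoc_beta: "avoids_ge_ge (e @ [c]) \<Longrightarrow> beta e < int c"
  unfolding beta_less_iff
proof (intro allI impI)
  fix j assume a: "avoids_ge_ge (e @ [c])" and j: "j < length e" "\<not> ltr_max e j"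
  then obtain i where i: "i < j" "e ! i \<ge> e ! j"
    unfolding ltr_max_def by (auto simp: not_less)
  show "e ! j < c"
  proof (rule ccontr)
    assume "\<not> e ! j < c"
    then have "(e @ [c]) ! i \<ge> (e @ [c]) ! j \<and> (e @ [c]) ! j \<ge> (e @ [c]) ! length e"
      using i j by (simp add: nth_append)
    then show False
      using a i j unfolding avoids_ge_ge_def by (metis length_append_singleton lessI)
  qed
qed

lemma avoids_ge_ge_snoc_intro:
  assumes e: "avoids_ge_ge e" and c: "beta e < int c"
  shows "avoids_ge_ge (e @ [c])"
  unfolding avoids_ge_ge_def
proof (intro notI, elim exE conjE)
  fix i j k
  assume ijk: "i < j" "j < k" "k < length (e @ [c])"
    and ge: "(e @ [c]) ! i \<ge> (e @ [c]) ! j" "(e @ [c]) ! j \<ge> (e @ [c]) ! k"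
  have ij: "e ! i \<ge> e ! j" "j < length e"
    using ijk ge by (simp_all add: nth_append)
  show False
  proof (cases "k < length e")
    case True
    then have "e ! j \<ge> e ! k"
      using ijk ge by (simp add: nth_append)
    then show False
      using e ij ijk True unfolding avoids_ge_ge_def by blast
  next
    case False
    then have "e ! j \<ge> c"
      using ijk ge by (simp add: nth_append)
    moreover have "\<not> ltr_max e j"
      using ij ijk unfolding ltr_max_def by (auto simp: not_less)
    then have "e ! j < c"
      using c ij unfolding beta_less_iff by blast
    ultimately show False
      by simp
  qed
qed

lemma avoids_ge_ge_snoc: "avoids_ge_ge (e @ [c]) \<longleftrightarrow> avoids_ge_ge e \<and> beta e < int c"
  using avoids_ge_ge_snoc_prefix avoids_ge_ge_snoc_beta avoids_ge_ge_snoc_intro by blast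

lemma par_snoc_old_max:
  assumes "e \<noteq> []" "int c \<le> alpha e" "beta e < int c"
  shows "par_p (e @ [c]) = alpha e - int c" "par_q (e @ [c]) = par_q e + 1"
  using assms by (simp_all add: par_p_def par_q_def alpha_snoc beta_snoc ltr_max_snoc_last max_def)

lemma par_snoc_new_max:
  assumes "e \<noteq> []" "alpha e < int c"
  shows "par_p (e @ [c]) = int c - beta e" "par_q (e @ [c]) = int (length e) + 1 - int c"
  using assms by (simp_all add: par_p_def par_q_def alpha_snoc beta_snoc ltr_max_snoc_last)

lemma inv_seq_snoc: "e @ [c] \<in> inv_seq (Suc n) \<longleftrightarrow> e \<in> inv_seq n \<and> c \<le> n"
  unfolding inv_seq_def by (auto simp: nth_append less_Suc_eq)

definition admissible_last :: "nat list \<Rightarrow> nat \<Rightarrow> nat set" where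
  "admissible_last e n = {c. beta e < int c \<and> c \<le> n}"

lemma I_gge_Suc: "I_gge (Suc n) = (\<lambda>(e, c). e @ [c]) ` (SIGMA e:I_gge n. admissible_last e n)"
proof -
  have snoc: "e @ [c] \<in> I_gge (Suc n) \<longleftrightarrow> e \<in> I_gge n \<and> c \<in> admissible_last e n" for e c
    unfolding I_gge_def admissible_last_def by (simp add: inv_seq_snoc avoids_ge_ge_snoc conj_ac)
  show ?thesis
  proof (intro set_eqI iffI)
    fix x assume x: "x \<in> I_gge (Suc n)"
    then have "x \<noteq> []"
      by (auto simp: I_gge_def inv_seq_def)
    then have "x = butlast x @ [last x]"
      by simp
    with x snoc show "x \<in> (\<lambda>(e, c). e @ [c]) ` (SIGMA e:I_gge n. admissible_last e n)"
      by (metis (no_types, lifting) SigmaI case_prod_conv image_eqI)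
  next
    fix x assume "x \<in> (\<lambda>(e, c). e @ [c]) ` (SIGMA e:I_gge n. admissible_last e n)"
    then obtain e c where "x = e @ [c]" "e \<in> I_gge n" "c \<in> admissible_last e n"
      by auto
    then show "x \<in> I_gge (Suc n)"
      using snoc by simp
  qed
qed

lemma sum_I_gge_Suc:
  "(\<Sum>e'\<in>I_gge (Suc n). f e') = (\<Sum>e\<in>I_gge n. \<Sum>c\<in>admissible_last e n. f (e @ [c]))"
proof -
  have "finite (I_gge n)"
  proof (rule finite_subset)
    show "I_gge n \<subseteq> {xs. set xs \<subseteq> {..n} \<and> length xs = n}"
      unfolding I_gge_def inv_seq_def by (auto simp: in_set_conv_nth) (meson dual_order.trans less_imp_le_nat)
    show "finite {xs. set xs \<subseteq> {..n} \<and> length xs = n}"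
      by (rule finite_lists_length_eq) simp
  qed
  moreover have "finite (admissible_last e n)" for e
    unfolding admissible_last_def by simp
  moreover have "inj_on (\<lambda>(e, c). e @ [c]) A" for A :: "(nat list \<times> nat) set"
    by (auto simp: inj_on_def)
  ultimately show ?thesis
    unfolding I_gge_Suc by (simp add: sum.reindex sum.Sigma split_def)
qed

section \<open>The recurrence for the coefficients\<close>

definition weight :: "'a::comm_ring_1 \<Rightarrow> 'a \<Rightarrow> nat list \<Rightarrow> 'a" where
  "weight u v e = u ^ nat (par_p e) * v ^ nat (par_q e)"

definition E_coeff :: "nat \<Rightarrow> 'a::comm_ring_1 \<Rightarrow> 'a \<Rightarrow> 'a" where
  "E_coeff n u v = (\<Sum>e\<in>I_gge n. weight u v e)"

lemma E_gf_nth: "E_gf u v $ n = (if n = 0 then 0 else E_coeff n u v)"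
  by (simp add: E_gf_def E_coeff_def weight_def)

lemma I_gge_alpha_beta:
  assumes "e \<in> I_gge n" "n \<noteq> 0"
  obtains A B where "alpha e = int A" "beta e = int B - 1" "B \<le> Suc A" "A < n"
proof
  show "alpha e = int (nat (alpha e))"
    by (simp add: alpha_def)
  show "beta e = int (nat (beta e + 1)) - 1"
    using beta_ge[of e] by simp
  have "e \<noteq> []"
    using assms by (auto simp: I_gge_def inv_seq_def)
  then have "beta e \<le> alpha e" "alpha e < int n"
    using beta_le_alpha alpha_less_length assms(1) by (auto simp: I_gge_def)
  then show "nat (beta e + 1) \<le> Suc (nat (alpha e))" "nat (alpha e) < n"
    by (simp_all add: nat_le_iff nat_less_iff alpha_def)
qed

lemma sum_weight_snoc_old_max:
  fixes u v :: "'a::comm_ring_1"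
  assumes "e \<noteq> []" "alpha e = int A" "beta e = int B - 1" "par_q e = int q"
  shows "(\<Sum>c\<in>{B..<Suc A}. weight u v (e @ [c])) = v ^ Suc q * (\<Sum>i<Suc A - B. u ^ (Suc A - B - Suc i))"
proof -
  have "(\<Sum>c\<in>{B..<Suc A}. weight u v (e @ [c])) = (\<Sum>i\<in>{0..<Suc A - B}. weight u v (e @ [B + i]))"
    by (simp only: sum.atLeastLessThan_shift_0[of _ B] comp_def)
  also have "\<dots> = (\<Sum>i<Suc A - B. v ^ Suc q * u ^ (Suc A - B - Suc i))"
  proof (intro sum.cong)
    fix i assume "i \<in> {..<Suc A - B}"
    then have "nat (par_p (e @ [B + i])) = Suc A - B - Suc i" "nat (par_q (e @ [B + i])) = Suc q"
      using assms par_snoc_old_max[of e "B + i"] by (auto simp: nat_eq_iff of_nat_diff)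
    then show "weight u v (e @ [B + i]) = v ^ Suc q * u ^ (Suc A - B - Suc i)"
      by (simp add: weight_def mult.commute)
  qed (simp add: atLeast0LessThan)
  finally show ?thesis
    by (simp add: sum_distrib_left)
qed

lemma sum_weight_snoc_new_max:
  fixes u v :: "'a::comm_ring_1"
  assumes "e \<noteq> []" "alpha e = int A" "beta e = int B - 1" "B \<le> Suc A" "length e = n"
  shows "(\<Sum>c\<in>{Suc A..<Suc n}. weight u v (e @ [c]))
       = u ^ Suc (Suc A - B) * v * (\<Sum>i<n - A. v ^ (n - A - Suc i) * u ^ i)"
proof -
  have "(\<Sum>c\<in>{Suc A..<Suc n}. weight u v (e @ [c])) = (\<Sum>i\<in>{0..<n - A}. weight u v (e @ [Suc A + i]))"
    by (simp only: sum.atLeastLessThan_shift_0[of _ "Suc A"] comp_def diff_Suc_Suc)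
  also have "\<dots> = (\<Sum>i<n - A. u ^ Suc (Suc A - B) * v * (v ^ (n - A - Suc i) * u ^ i))"
  proof (intro sum.cong)
    fix i assume "i \<in> {..<n - A}"
    then have "nat (par_p (e @ [Suc A + i])) = Suc (Suc A - B) + i"
      "nat (par_q (e @ [Suc A + i])) = Suc (n - A - Suc i)"
      using assms par_snoc_new_max[of e "Suc A + i"] by (auto simp: nat_eq_iff of_nat_diff)
    then show "weight u v (e @ [Suc A + i]) = u ^ Suc (Suc A - B) * v * (v ^ (n - A - Suc i) * u ^ i)"
      by (simp add: weight_def power_add mult_ac)
  qed (simp add: atLeast0LessThan)
  finally show ?thesis
    by (simp add: sum_distrib_left)
qed

lemma sum_weight_snoc:
  fixes u v :: "'a::comm_ring_1"
  assumes e: "e \<in> I_gge n" and n: "n \<noteq> 0"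
  defines "p \<equiv> nat (par_p e)" and "q \<equiv> nat (par_q e)"
  shows "(\<Sum>c\<in>admissible_last e n. weight u v (e @ [c]))
       = v ^ Suc q * (\<Sum>i<p. u ^ (p - Suc i)) + u ^ Suc p * v * (\<Sum>i<q. v ^ (q - Suc i) * u ^ i)"
proof -
  obtain A B where alpha: "alpha e = int A" and beta: "beta e = int B - 1" and BA: "B \<le> Suc A"
    and An: "A < n"
    using I_gge_alpha_beta[OF e n] .
  have len: "length e = n" and ne: "e \<noteq> []"
    using e n by (auto simp: I_gge_def inv_seq_def)
  have par_p_e: "par_p e = int (Suc A - B)" and par_q_e: "par_q e = int (n - A)"
    using BA An by (simp_all add: par_p_def par_q_def alpha beta len)
  have p: "p = Suc A - B" and q: "q = n - A"
    by (simp_all add: p_def q_def par_p_e par_q_e)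
  have adm: "admissible_last e n = {B..<Suc n}"
    by (auto simp: admissible_last_def beta)
  have concat: "(\<Sum>c\<in>{B..<Suc n}. weight u v (e @ [c]))
      = (\<Sum>c\<in>{B..<Suc A}. weight u v (e @ [c])) + (\<Sum>c\<in>{Suc A..<Suc n}. weight u v (e @ [c]))"
    using BA An by (intro sum.atLeastLessThan_concat[symmetric]) simp_all
  show ?thesis
    unfolding adm concat p q
    by (simp only: sum_weight_snoc_old_max[OF ne alpha beta par_q_e]
        sum_weight_snoc_new_max[OF ne alpha beta BA len])
qed

lemma kernel_sum_weight_snoc:
  fixes u v :: "'a::comm_ring_1"
  assumes "e \<in> I_gge n" "n \<noteq> 0"
  shows "(1 - u) * (u - v) * (\<Sum>c\<in>admissible_last e n. weight u v (e @ [c]))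
       = v * (u - v) * (weight 1 v e - weight u v e) + u * v * (1 - u) * (weight u u e - weight u v e)"
proof -
  define p where "p = nat (par_p e)"
  define q where "q = nat (par_q e)"
  have "(1 - u) * (u - v) * (\<Sum>c\<in>admissible_last e n. weight u v (e @ [c]))
      = (u - v) * v ^ Suc q * ((1 - u) * (\<Sum>i<p. u ^ (p - Suc i)))
        + (1 - u) * u ^ Suc p * v * ((u - v) * (\<Sum>i<q. v ^ (q - Suc i) * u ^ i))"
    unfolding sum_weight_snoc[OF assms] p_def q_def by (simp add: algebra_simps)
  also have "\<dots> = (u - v) * v ^ Suc q * (1 - u ^ p) + (1 - u) * u ^ Suc p * v * (u ^ q - v ^ q)"
    by (simp only: one_diff_power_eq' power_diff_sumr2)
  also have "\<dots> = v * (u - v) * (weight 1 v e - weight u v e) + u * v * (1 - u) * (weight u u e - weight u v e)"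
    by (simp add: weight_def p_def q_def algebra_simps power_add)
  finally show ?thesis .
qed

lemma E_coeff_Suc:
  fixes u v :: "'a::comm_ring_1"
  assumes "n \<noteq> 0"
  shows "(1 - u) * (u - v) * E_coeff (Suc n) u v
       = v * (u - v) * (E_coeff n 1 v - E_coeff n u v) + u * v * (1 - u) * (E_coeff n u u - E_coeff n u v)"
proof -
  have "(1 - u) * (u - v) * E_coeff (Suc n) u v
      = (\<Sum>e\<in>I_gge n. (1 - u) * (u - v) * (\<Sum>c\<in>admissible_last e n. weight u v (e @ [c])))"
    by (simp add: E_coeff_def sum_I_gge_Suc sum_distrib_left)
  also have "\<dots> = (\<Sum>e\<in>I_gge n. v * (u - v) * (weight 1 v e - weight u v e)
      + u * v * (1 - u) * (weight u u e - weight u v e))"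
    using assms by (intro sum.cong refl kernel_sum_weight_snoc)
  finally show ?thesis
    by (simp add: E_coeff_def sum.distrib sum_subtractf sum_distrib_left right_diff_distrib)
qed

lemma E_coeff_1: "E_coeff 1 u v = u * v"
proof -
  have "I_gge 1 = {[0]}"
    by (auto simp: I_gge_def inv_seq_def avoids_ge_ge_def length_Suc_conv)
  moreover have "alpha [0] = 0" "beta [0] = -1"
    by (auto simp: alpha_def beta_def ltr_max_def)
  ultimately show ?thesis
    by (simp add: E_coeff_def weight_def par_p_def par_q_def)
qed

section \<open>Substituting power series and the functional equation\<close>

lemma sum_triangle_swap:
  fixes k :: nat
  shows "(\<Sum>n\<le>k. \<Sum>i\<le>k - n. g i n) = (\<Sum>i\<le>k. \<Sum>n\<le>k - i. (g i n :: 'a::comm_monoid_add))"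
proof -
  have "(\<Sum>n\<le>k. \<Sum>i\<le>k - n. g i n) = (\<Sum>n\<in>{..k}. \<Sum>i\<in>{i\<in>{..k}. n + i \<le> k}. g i n)"
    by (intro sum.cong) auto
  also have "\<dots> = (\<Sum>i\<in>{..k}. \<Sum>n\<in>{n\<in>{..k}. n + i \<le> k}. g i n)"
    by (rule sum.swap_restrict) auto
  also have "\<dots> = (\<Sum>i\<le>k. \<Sum>n\<le>k - i. g i n)"
    by (intro sum.cong) auto
  finally show ?thesis .
qed

text \<open>The series \<open>\<Sum>n. X\<^sup>n * f n\<close>, which converges X-adically for every family \<open>f\<close>.\<close>
definition fps_Xsum :: "(nat \<Rightarrow> 'a::comm_ring_1 fps) \<Rightarrow> 'a fps" where
  "fps_Xsum f = Abs_fps (\<lambda>k. \<Sum>n\<le>k. f n $ (k - n))"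

lemma fps_Xsum_nth: "fps_Xsum f $ k = (\<Sum>n\<le>k. f n $ (k - n))"
  by (simp add: fps_Xsum_def)

lemma fps_Xsum_add: "fps_Xsum (\<lambda>n. f n + g n) = fps_Xsum f + fps_Xsum g"
  by (rule fps_ext) (simp add: fps_Xsum_nth sum.distrib)

lemma fps_Xsum_diff: "fps_Xsum (\<lambda>n. f n - g n) = fps_Xsum f - fps_Xsum g"
  by (rule fps_ext) (simp add: fps_Xsum_nth sum_subtractf)

lemma fps_Xsum_mult_left: "fps_Xsum (\<lambda>n. c * f n) = c * fps_Xsum f"
proof (rule fps_ext)
  fix k
  have "fps_Xsum (\<lambda>n. c * f n) $ k = (\<Sum>n\<le>k. \<Sum>i\<le>k - n. c $ i * f n $ (k - n - i))"
    by (simp add: fps_Xsum_nth fps_mult_nth atLeast0AtMost)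
  also have "\<dots> = (\<Sum>i\<le>k. \<Sum>n\<le>k - i. c $ i * f n $ (k - n - i))"
    by (rule sum_triangle_swap)
  also have "\<dots> = (c * fps_Xsum f) $ k"
    by (simp add: fps_Xsum_nth fps_mult_nth atLeast0AtMost sum_distrib_left diff_commute add.commute)
  finally show "fps_Xsum (\<lambda>n. c * f n) $ k = (c * fps_Xsum f) $ k" .
qed

lemma fps_Xsum_shift: "fps_Xsum f = f 0 + fps_X * fps_Xsum (\<lambda>n. f (Suc n))"
proof (rule fps_ext)
  fix k
  show "fps_Xsum f $ k = (f 0 + fps_X * fps_Xsum (\<lambda>n. f (Suc n))) $ k"
    by (cases k) (simp_all add: fps_Xsum_nth fps_X_mult_nth sum.atMost_Suc_shift del: sum.atMost_Suc)
qed

text \<open>\<open>E(u, v)\<close> for power series \<open>u, v\<close> in \<open>t\<close>: the generating function with \<open>t\<close> substituted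
  into the coefficient ring as well.\<close>
definition E_fps :: "'a::comm_ring_1 fps \<Rightarrow> 'a fps \<Rightarrow> 'a fps" where
  "E_fps u v = fps_X * fps_Xsum (\<lambda>n. E_coeff (Suc n) u v)"

text \<open>The functional equation for \<open>E(u, v)\<close> multiplied by \<open>(1 - u)(u - v)\<close>.\<close>
lemma E_fps_functional_eq:
  fixes u v :: "'a::comm_ring_1 fps"
  shows "((1 - u) * (u - v) + fps_X * v * (u - v) + fps_X * u * v * (1 - u)) * E_fps u v
       = fps_X * u * v * (1 - u) * (u - v) + fps_X * v * (u - v) * E_fps 1 v
         + fps_X * u * v * (1 - u) * E_fps u u"
proof -
  define F where "F w z = fps_Xsum (\<lambda>n. E_coeff (Suc n) w z)" for w z :: "'a fps"
  have "(1 - u) * (u - v) * F u v = fps_Xsum (\<lambda>n. (1 - u) * (u - v) * E_coeff (Suc n) u v)"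
    by (simp add: F_def fps_Xsum_mult_left)
  also have "\<dots> = (1 - u) * (u - v) * (u * v)
      + fps_X * fps_Xsum (\<lambda>n. (1 - u) * (u - v) * E_coeff (Suc (Suc n)) u v)"
    by (subst fps_Xsum_shift) (simp add: E_coeff_1[unfolded One_nat_def])
  also have "fps_Xsum (\<lambda>n. (1 - u) * (u - v) * E_coeff (Suc (Suc n)) u v)
      = fps_Xsum (\<lambda>n. v * (u - v) * (E_coeff (Suc n) 1 v - E_coeff (Suc n) u v)
          + u * v * (1 - u) * (E_coeff (Suc n) u u - E_coeff (Suc n) u v))"
    by (simp add: E_coeff_Suc)
  also have "\<dots> = v * (u - v) * (F 1 v - F u v) + u * v * (1 - u) * (F u u - F u v)"
    by (simp add: F_def fps_Xsum_add fps_Xsum_diff fps_Xsum_mult_left)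
  finally have F_rec: "(1 - u) * (u - v) * F u v = (1 - u) * (u - v) * (u * v)
      + fps_X * (v * (u - v) * (F 1 v - F u v) + u * v * (1 - u) * (F u u - F u v))" .
  have "((1 - u) * (u - v) + fps_X * v * (u - v) + fps_X * u * v * (1 - u)) * (fps_X * F u v)
      = fps_X * ((1 - u) * (u - v) * F u v) + fps_X * fps_X * (v * (u - v) + u * v * (1 - u)) * F u v"
    by (simp add: algebra_simps)
  also have "\<dots> = fps_X * u * v * (1 - u) * (u - v) + fps_X * v * (u - v) * (fps_X * F 1 v)
      + fps_X * u * v * (1 - u) * (fps_X * F u u)"
    unfolding F_rec by (simp add: algebra_simps)
  finally show ?thesis
    unfolding E_fps_def F_def .
qed

section \<open>Roots of the kernel\<close>

lemma E_fps_kernel_root: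
  fixes a b :: "'a::field fps"
  assumes root: "a * b = fps_X * (1 + a) * (1 + b) * (a + b)" and "1 + a \<noteq> 0" "1 + b \<noteq> 0"
  shows "a * E_fps (1 + a) (1 + a) + b * E_fps 1 ((1 + a) * (1 + b)) = a * b * (1 + a)"
proof -
  let ?u = "1 + a" and ?v = "(1 + a) * (1 + b)"
  have "(1 - ?u) * (?u - ?v) + fps_X * ?v * (?u - ?v) + fps_X * ?u * ?v * (1 - ?u)
      = ?u * (a * b - fps_X * (1 + a) * (1 + b) * (a + b))"
    by (simp add: algebra_simps)
  also have "\<dots> = 0"
    using root by simp
  finally have "0 = fps_X * ?u * ?v * (1 - ?u) * (?u - ?v) + fps_X * ?v * (?u - ?v) * E_fps 1 ?v
      + fps_X * ?u * ?v * (1 - ?u) * E_fps ?u ?u"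
    using E_fps_functional_eq[of ?u ?v] by (simp only: mult_zero_left)
  also have "\<dots> = fps_X * (1 + a) ^ 2 * (1 + b)
      * (a * b * (1 + a) - b * E_fps 1 ?v - a * E_fps ?u ?u)"
    by (simp add: algebra_simps power2_eq_square)
  finally have "a * b * (1 + a) - b * E_fps 1 ?v - a * E_fps ?u ?u = 0"
    using assms(2,3) by simp
  then show ?thesis
    by (simp add: algebra_simps)
qed

lemma E_fps_kernel_root_pair:
  fixes a b :: "'a::field fps"
  assumes root: "a * b = fps_X * (1 + a) * (1 + b) * (a + b)" and "1 + a \<noteq> 0" "1 + b \<noteq> 0"
  shows "a\<^sup>2 * E_fps (1 + a) (1 + a) - b\<^sup>2 * E_fps (1 + b) (1 + b) = a * b * (a - b) * (1 + a + b)"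
proof -
  have "b * a = fps_X * (1 + b) * (1 + a) * (b + a)"
    using root by (simp add: ac_simps)
  then have b: "b * E_fps (1 + b) (1 + b) = a * b * (1 + b) - a * E_fps 1 ((1 + a) * (1 + b))"
    using E_fps_kernel_root[of b a] assms(2,3) by (simp add: ac_simps eq_diff_eq)
  have a: "a * E_fps (1 + a) (1 + a) = a * b * (1 + a) - b * E_fps 1 ((1 + a) * (1 + b))"
    using E_fps_kernel_root[OF assms] by (simp add: eq_diff_eq)
  have "a\<^sup>2 * E_fps (1 + a) (1 + a) - b\<^sup>2 * E_fps (1 + b) (1 + b)
      = a * (a * E_fps (1 + a) (1 + a)) - b * (b * E_fps (1 + b) (1 + b))"
    by (simp add: power2_eq_square mult.assoc)
  also have "\<dots> = a * b * (a - b) * (1 + a + b)"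
    unfolding a b by (simp add: algebra_simps)
  finally show ?thesis .
qed

lemma fps_eq_X_mult_self:
  fixes d g :: "'a::idom fps"
  assumes "d = fps_X * g * d"
  shows "d = 0"
proof (rule ccontr)
  assume "d \<noteq> 0"
  with assms have "g \<noteq> 0"
    by auto
  from assms have "subdegree d = subdegree (fps_X * g * d)"
    by (rule arg_cong)
  also have "\<dots> = 1 + subdegree g + subdegree d"
    using \<open>g \<noteq> 0\<close> \<open>d \<noteq> 0\<close> by (simp add: subdegree_mult)
  finally show False
    by simp
qed

lemma fps_quadratic_fixpoint_unique:
  fixes a b :: "'a::idom"
  assumes "Y = fps_X * fps_const a * (1 + Y) * (fps_const b + Y)"
    and "Z = fps_X * fps_const a * (1 + Z) * (fps_const b + Z)"
  shows "Y = Z"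
proof -
  have "Y - Z = fps_X * fps_const a * ((1 + Y) * (fps_const b + Y) - (1 + Z) * (fps_const b + Z))"
    by (subst assms(1), subst assms(2)) (simp add: algebra_simps)
  also have "\<dots> = fps_X * (fps_const a * (1 + fps_const b + Y + Z)) * (Y - Z)"
    by (simp add: algebra_simps)
  finally have "Y - Z = 0"
    by (rule fps_eq_X_mult_self)
  then show ?thesis
    by simp
qed

lemma fps_quadratic_fixpoint_exists:
  fixes a b :: "'a::field"
  assumes "a \<noteq> 0" "b \<noteq> 0"
  shows "\<exists>Y. Y = fps_X * fps_const a * (1 + Y) * (fps_const b + Y)"
proof -
  \<comment> \<open>\<open>Y\<close> is the compositional inverse of \<open>X / \<phi>(X)\<close>, so that \<open>Y / \<phi>(Y) = X\<close>.\<close>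
  define \<phi> where "\<phi> = fps_const a * (1 + fps_X) * (fps_const b + fps_X)"
  define Y where "Y = fps_inv (fps_X * inverse \<phi>)"
  have \<phi>0: "\<phi> $ 0 \<noteq> 0"
    using assms by (simp add: \<phi>_def fps_mult_nth)
  have Y0: "Y $ 0 = 0"
    by (simp add: Y_def fps_inv_def)
  have "fps_X * inverse \<phi> oo Y = fps_X"
    unfolding Y_def using \<phi>0 by (intro fps_inv_right) (simp_all add: fps_X_mult_nth)
  moreover have "fps_X * inverse \<phi> oo Y = Y * inverse (\<phi> oo Y)"
    using Y0 \<phi>0 by (simp add: fps_compose_mult_distrib fps_inverse_compose)
  moreover have "inverse (\<phi> oo Y) * (\<phi> oo Y) = 1"
    using \<phi>0 Y0 by (intro inverse_mult_eq_1) simp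
  ultimately have "Y = fps_X * (\<phi> oo Y)"
    by (metis mult.assoc mult_1_right)
  also have "\<phi> oo Y = fps_const a * (1 + Y) * (fps_const b + Y)"
    unfolding \<phi>_def using Y0 by (simp add: fps_compose_mult_distrib fps_compose_add_distrib)
  finally show ?thesis
    by (auto simp: mult.assoc)
qed

section \<open>The series Y and its orbit\<close>

abbreviation xc :: ser where "xc \<equiv> fps_const xx"
abbreviation xbc :: ser where "xbc \<equiv> fps_const xb"

lemma fls_X_times_X_inv: "xx * xb = 1"
  by (simp add: fls_X_conv_shift_1 fls_X_inv_conv_shift_1 fls_shifted_times_simps)

lemma one_plus_xx_nonzero: "1 + xx \<noteq> 0"
proof
  assume "1 + xx = 0"
  then have "fls_nth (1 + xx) 1 = 0" by simp
  then show False by simp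
qed

lemma one_plus_xb_nonzero: "1 + xb \<noteq> 0"
proof
  assume "1 + xb = 0"
  then have "fls_nth (1 + xb) (-1) = 0" by simp
  then show False by simp
qed

lemma Yser_eq: "Yser = fps_X * (1 + xbc) * (1 + Yser) * (xc + Yser)"
proof -
  have "1 + xb \<noteq> 0" "xx \<noteq> 0"
    using fls_X_times_X_inv one_plus_xb_nonzero by auto
  then have "\<exists>Y. Y = fps_X * fps_const (1 + xb) * (1 + Y) * (xc + Y)"
    by (rule fps_quadratic_fixpoint_exists)
  then have "\<exists>!Y. Y = fps_X * fps_const (1 + xb) * (1 + Y) * (xc + Y)"
    using fps_quadratic_fixpoint_unique by (rule ex_ex1I)
  then have "Yser = fps_X * fps_const (1 + xb) * (1 + Yser) * (xc + Yser)"
    unfolding Yser_def by (rule theI')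
  moreover have "fps_const (1 + xb) = 1 + xbc"
    by (metis fps_const_1_eq_1 fps_const_add)
  ultimately show ?thesis
    by simp
qed

lemma E_fps_orbit_sum:
  "xc\<^sup>2 * E_fps (1 + xc) (1 + xc) - xbc\<^sup>2 * E_fps (1 + xbc) (1 + xbc)
   = xc * Yser * (xc - Yser) * (1 + xc + Yser)
     + Yser * (Yser * xbc) * (Yser - Yser * xbc) * (1 + Yser + Yser * xbc)
     + Yser * xbc * xbc * (Yser * xbc - xbc) * (1 + Yser * xbc + xbc)"
proof -
  let ?Y = Yser and ?Z = "Yser * xbc"
  have inv: "xc * xbc = 1"
    by (simp add: fls_X_times_X_inv)
  have Y0: "?Y $ 0 = 0"
    by (subst Yser_eq) simp
  have root1: "xc * ?Y = fps_X * (1 + xc) * (1 + ?Y) * (xc + ?Y)"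
    using Yser_eq inv by algebra
  have root2: "?Y * ?Z = fps_X * (1 + ?Y) * (1 + ?Z) * (?Y + ?Z)"
    using Yser_eq inv by algebra
  have root3: "?Z * xbc = fps_X * (1 + ?Z) * (1 + xbc) * (?Z + xbc)"
    using Yser_eq inv by algebra
  have "(1 + xc) $ 0 \<noteq> 0" "(1 + ?Y) $ 0 \<noteq> 0" "(1 + ?Z) $ 0 \<noteq> 0" "(1 + xbc) $ 0 \<noteq> 0"
    using one_plus_xx_nonzero one_plus_xb_nonzero Y0 by (simp_all add: fps_mult_nth)
  then have nz: "1 + xc \<noteq> 0" "1 + ?Y \<noteq> 0" "1 + ?Z \<noteq> 0" "1 + xbc \<noteq> 0"
    by (metis fps_zero_nth)+
  have "xc\<^sup>2 * E_fps (1 + xc) (1 + xc) - xbc\<^sup>2 * E_fps (1 + xbc) (1 + xbc)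
      = (xc\<^sup>2 * E_fps (1 + xc) (1 + xc) - ?Y\<^sup>2 * E_fps (1 + ?Y) (1 + ?Y))
        + (?Y\<^sup>2 * E_fps (1 + ?Y) (1 + ?Y) - ?Z\<^sup>2 * E_fps (1 + ?Z) (1 + ?Z))
        + (?Z\<^sup>2 * E_fps (1 + ?Z) (1 + ?Z) - xbc\<^sup>2 * E_fps (1 + xbc) (1 + xbc))"
    by simp
  also have "\<dots> = xc * ?Y * (xc - ?Y) * (1 + xc + ?Y) + ?Y * ?Z * (?Y - ?Z) * (1 + ?Y + ?Z)
      + ?Z * xbc * (?Z - xbc) * (1 + ?Z + xbc)"
    using E_fps_kernel_root_pair[OF root1 nz(1,2)] E_fps_kernel_root_pair[OF root2 nz(2,3)]
      E_fps_kernel_root_pair[OF root3 nz(3,4)] by simp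
  finally show ?thesis .
qed

lemma Rser_Yser: "Rser Yser = E_fps (1 + xc) (1 + xc) - xbc ^ 4 * E_fps (1 + xbc) (1 + xbc)"
proof -
  have inv: "xc * xbc = 1"
    by (simp add: fls_X_times_X_inv)
  have const: "fps_const (xx + 1 - xb ^ 5 - xb ^ 6) = xc + 1 - xbc ^ 5 - xbc ^ 6"
    "fps_const (xb ^ 5 - xb) = xbc ^ 5 - xbc"
    "fps_const (xb ^ 3 + xb ^ 6 - xb - xb ^ 4) = xbc ^ 3 + xbc ^ 6 - xbc - xbc ^ 4"
    "fps_const (xb ^ 3 - xb ^ 5) = xbc ^ 3 - xbc ^ 5"
    by (rule fps_ext; simp add: fps_const_power)+
  have "Rser Yser = Yser * (xc + 1 - xbc ^ 5 - xbc ^ 6) + Yser ^ 2 * (xbc ^ 5 - xbc)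
      + Yser ^ 3 * (xbc ^ 3 + xbc ^ 6 - xbc - xbc ^ 4) + Yser ^ 4 * (xbc ^ 3 - xbc ^ 5)"
    unfolding Rser_def const ..
  also have "\<dots> = xbc\<^sup>2 * (xc * Yser * (xc - Yser) * (1 + xc + Yser)
      + Yser * (Yser * xbc) * (Yser - Yser * xbc) * (1 + Yser + Yser * xbc)
      + Yser * xbc * xbc * (Yser * xbc - xbc) * (1 + Yser * xbc + xbc))"
    using inv by algebra
  also have "\<dots> = xbc\<^sup>2 * (xc\<^sup>2 * E_fps (1 + xc) (1 + xc) - xbc\<^sup>2 * E_fps (1 + xbc) (1 + xbc))"
    by (simp only: E_fps_orbit_sum)
  also have "\<dots> = E_fps (1 + xc) (1 + xc) - xbc ^ 4 * E_fps (1 + xbc) (1 + xbc)"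
    using inv by algebra
  finally show ?thesis .
qed

section \<open>The non-negative part in x\<close>

lemma E_coeff_hom:
  assumes "h 0 = 0" "h 1 = 1" "\<And>x y. h (x + y) = h x + h y" "\<And>x y. h (x * y) = h x * h y"
  shows "h (E_coeff n u v) = E_coeff n (h u) (h v)"
proof -
  have power: "h (x ^ k) = h x ^ k" for x k
    by (induction k) (simp_all add: assms(2,4))
  show ?thesis
    unfolding E_coeff_def weight_def
    by (simp add: sum_comp_morphism[of h, symmetric, OF assms(1,3)] comp_def power assms(4))
qed

lemma fps_Xsum_const: "fps_Xsum (\<lambda>n. fps_const (g n)) = Abs_fps g"
proof (rule fps_ext)
  fix k
  have "(\<Sum>n\<le>k. fps_const (g n) $ (k - n)) = (\<Sum>n\<le>k. if n = k then g n else 0)"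
    by (intro sum.cong) auto
  then show "fps_Xsum (\<lambda>n. fps_const (g n)) $ k = Abs_fps g $ k"
    by (simp add: fps_Xsum_nth)
qed

lemma E_fps_const: "E_fps (fps_const u) (fps_const v) = E_gf u v"
proof -
  have "E_coeff n (fps_const u) (fps_const v) = fps_const (E_coeff n u v)" for n
    by (rule E_coeff_hom[symmetric]) simp_all
  then show ?thesis
    by (intro fps_ext) (simp add: E_fps_def fps_Xsum_const fps_X_mult_nth E_gf_nth)
qed

lemma fls_nth_X_inv_power_mult_binomial:
  assumes "0 < m" "0 \<le> i"
  shows "fls_nth (xb ^ m * (1 + xb) ^ k) i = 0"
proof -
  have "1 + xb = xb * fps_to_fls (1 + fps_X)"
    using fls_X_times_X_inv by (simp add: distrib_left mult.commute fps_X_to_fls)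
  then have "xb ^ m * (1 + xb) ^ k = fls_shift (int (m + k)) (fps_to_fls ((1 + fps_X) ^ k))"
    by (simp add: power_mult_distrib fps_to_fls_power power_add mult.assoc
        fls_X_inv_power_times_conv_shift(1) add.commute flip: power_add)
  then have "fls_nth (xb ^ m * (1 + xb) ^ k) i = ((1 + fps_X :: rat fps) ^ k) $ nat (i + int (m + k))"
    using assms by simp
  also have "\<dots> = of_nat (k choose nat (i + int (m + k)))"
    by (simp flip: fps_binomial_of_nat binomial_gbinomial)
  also have "\<dots> = 0"
    using assms by simp
  finally show ?thesis .
qed

lemma fls_regpart_X_inv_power_E_gf: "fls_regpart (xb ^ 4 * E_gf (1 + xb) (1 + xb) $ n) = 0"
proof (rule fps_ext)
  fix i
  have "fls_nth (xb ^ 4 * E_coeff n (1 + xb) (1 + xb)) (int i) = 0"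
    unfolding E_coeff_def weight_def sum_distrib_left fls_nth_sum
    by (simp add: fls_nth_X_inv_power_mult_binomial flip: power_add)
  then show "fls_regpart (xb ^ 4 * E_gf (1 + xb) (1 + xb) $ n) $ i = 0 $ i"
    by (simp add: E_gf_nth)
qed

theorem theorem3p1:
  shows "E_gf (1 + fps_X) (1 + fps_X :: rat fps) = PT_x (Rser Yser)"
proof (rule fps_ext)
  fix n
  have one_plus: "1 + fps_const c = fps_const (1 + c)" for c :: "rat fls"
    by simp
  have "PT_x (Rser Yser) $ n
      = fls_regpart (E_gf (1 + xx) (1 + xx) $ n) - fls_regpart (xb ^ 4 * E_gf (1 + xb) (1 + xb) $ n)"
    unfolding PT_x_def Rser_Yser one_plus E_fps_const by (simp add: fps_const_power)
  also have "fls_regpart (xb ^ 4 * E_gf (1 + xb) (1 + xb) $ n) = 0"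
    by (rule fls_regpart_X_inv_power_E_gf)
  also have "E_gf (1 + xx) (1 + xx) $ n = fps_to_fls (E_gf (1 + fps_X) (1 + fps_X :: rat fps) $ n)"
    by (simp add: E_gf_nth E_coeff_hom[where h = fps_to_fls] fls_times_fps_to_fls fps_X_to_fls)
  finally show "E_gf (1 + fps_X) (1 + fps_X :: rat fps) $ n = PT_x (Rser Yser) $ n"
    by simp
qed

end
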